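(* Let $0=p_0<p_1<\cdots<p_M<p_{M+1}=1$, fix a labelled sample $\{(\bm x_j,y_j)\}_{j=1}^N$, and let $c^*$ be a risk model whose $\mathrm{AUNBC}$ is maximal among all risk models on this sample. Then there exist a risk model $c'$ (possibly $c'=c^*$) with $\mathrm{AUNBC}(c')=\mathrm{AUNBC}(c^* )$ and real numbers $q_0,\dots,q_M$ with $q_i\in G_i$ for every $i$, such that $q_iN_i(c')=O_i(c')$ for all $i=0,1,\dots,M$.
   Context: A risk model is any function $c$ assigning to each sample a value $c(\bm x_j)\in[0,1]$. For $i=0,\dots,M$, $\mathrm{TP}_i(c)=\#\{j:c(\bm x_j)\ge p_i,\ y_j=1\}$, $\mathrm{FP}_i(c)=\#\{j:c(\bm x_j)\ge p_i,\ y_j=0\}$, with $\mathrm{TP}_{M+1}=\mathrm{FP}_{M+1}=0$, and $\mathrm{AUNBC}(c)=\frac1N\sum_{i=0}^M(p_{i+1}-p_i)\big(\mathrm{TP}_i(c)-\mathrm{FP}_i(c)\frac{p_i}{1-p_i}\big)$. The risk groups are $G_i=[p_i,p_{i+1})$ for $i=0,\dots,M-1$ and $G_M=[p_M,1]$; $N_i(c)$ is the number of samples with $c(\bm x_j)\in G_i$ and $O_i(c)$ the number of positive samples with $c(\bm x_j)\in G_i$. *)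

theory Defs
  imports Complex_Main
begin

text \<open>Samples are indexed by j < N, with features x j and labels y j (True = positive).
  Thresholds p 0, ..., p (M+1).\<close>

definition risk_model :: "('a \<Rightarrow> real) \<Rightarrow> bool" where
  "risk_model c \<longleftrightarrow> (\<forall>z. 0 \<le> c z \<and> c z \<le> 1)"

definition TP :: "(nat \<Rightarrow> real) \<Rightarrow> nat \<Rightarrow> (nat \<Rightarrow> 'a) \<Rightarrow> (nat \<Rightarrow> bool) \<Rightarrow> ('a \<Rightarrow> real) \<Rightarrow> nat \<Rightarrow> nat" where
  "TP p N x y c i = card {j. j < N \<and> c (x j) \<ge> p i \<and> y j}"

definition FP :: "(nat \<Rightarrow> real) \<Rightarrow> nat \<Rightarrow> (nat \<Rightarrow> 'a) \<Rightarrow> (nat \<Rightarrow> bool) \<Rightarrow> ('a \<Rightarrow> real) \<Rightarrow> nat \<Rightarrow> nat" where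
  "FP p N x y c i = card {j. j < N \<and> c (x j) \<ge> p i \<and> \<not> y j}"

definition AUNBC :: "(nat \<Rightarrow> real) \<Rightarrow> nat \<Rightarrow> nat \<Rightarrow> (nat \<Rightarrow> 'a) \<Rightarrow> (nat \<Rightarrow> bool) \<Rightarrow> ('a \<Rightarrow> real) \<Rightarrow> real" where
  "AUNBC p M N x y c = (1 / real N) * (\<Sum>i\<le>M. (p (i+1) - p i) *
      (real (TP p N x y c i) - real (FP p N x y c i) * (p i / (1 - p i))))"

definition risk_group :: "(nat \<Rightarrow> real) \<Rightarrow> nat \<Rightarrow> nat \<Rightarrow> real set" where
  "risk_group p M i = (if i < M then {p i..<p (i+1)} else {p M..1})"

definition Ngrp :: "(nat \<Rightarrow> real) \<Rightarrow> nat \<Rightarrow> nat \<Rightarrow> (nat \<Rightarrow> 'a) \<Rightarrow> ('a \<Rightarrow> real) \<Rightarrow> nat \<Rightarrow> nat" where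
  "Ngrp p M N x c i = card {j. j < N \<and> c (x j) \<in> risk_group p M i}"

definition Ogrp :: "(nat \<Rightarrow> real) \<Rightarrow> nat \<Rightarrow> nat \<Rightarrow> (nat \<Rightarrow> 'a) \<Rightarrow> (nat \<Rightarrow> bool) \<Rightarrow> ('a \<Rightarrow> real) \<Rightarrow> nat \<Rightarrow> nat" where
  "Ogrp p M N x y c i = card {j. j < N \<and> c (x j) \<in> risk_group p M i \<and> y j}"

end

theory Submission
  imports Defs "HOL-Analysis.Convex"
begin

text \<open>The empirical positive rate r(z), the fraction of positive samples among those with
  features z, is an optimal risk model. After grouping the samples by their features, the
  threshold-p_i term of AUNBC receives (r - p_i) / (1 - p_i) from every sample classified
  positive, so classifying by r \<ge> p_i maximises every term at once. Hence r has the same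
  AUNBC as c*. Moreover r is calibrated: O_i(r) is the sum of r over the samples in G_i,
  so O_i / N_i is an average of points of the interval G_i and hence lies in G_i.\<close>

definition positive_rate :: "nat \<Rightarrow> (nat \<Rightarrow> 'a) \<Rightarrow> (nat \<Rightarrow> bool) \<Rightarrow> 'a \<Rightarrow> real" where
  "positive_rate N x y z =
     real (card {j. j < N \<and> x j = z \<and> y j}) / real (card {j. j < N \<and> x j = z})"

lemma risk_model_positive_rate: "risk_model (positive_rate N x y)"
proof -
  have ratio: "0 \<le> real a / real b \<and> real a / real b \<le> 1" if "a \<le> b" for a b :: nat
    using that by (cases "b = 0") (simp_all add: divide_le_eq_1)
  have "card {j. j < N \<and> x j = z \<and> y j} \<le> card {j. j < N \<and> x j = z}" for z
    by (rule card_mono) auto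
  then show ?thesis
    unfolding risk_model_def positive_rate_def using ratio by blast
qed

lemma real_card_filter_lessThan:
  fixes N :: nat
  shows "real (card {j. j < N \<and> P j}) = (\<Sum>j<N. if P j then 1 else 0)"
proof -
  have "{j. j < N \<and> P j} = {j \<in> {..<N}. P j}" by auto
  then show ?thesis using sum.inter_filter[of "{..<N}" "\<lambda>_. 1 :: real" P] by simp
qed

lemma sum_positive_eq_sum_positive_rate:
  "(\<Sum>j<N. if y j then g (x j) else 0) = (\<Sum>j<N. g (x j) * positive_rate N x y (x j))"
proof -
  define n where "n z = real (card {j. j < N \<and> x j = z})" for z
  have n_pos: "n (x k) > 0" if "k < N" for k
    using that unfolding n_def by (auto simp: card_gt_0_iff)
  have rate: "g (x j) * positive_rate N x y (x j)
      = (\<Sum>k<N. if x k = x j \<and> y k then g (x k) / n (x k) else 0)" for j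
  proof -
    have "positive_rate N x y (x j) = (\<Sum>k<N. if x k = x j \<and> y k then 1 else 0) / n (x j)"
      unfolding positive_rate_def n_def real_card_filter_lessThan by (simp add: conj_assoc)
    then show ?thesis
      by (simp add: sum_distrib_left sum_divide_distrib) (intro sum.cong; simp)
  qed
  have count: "(\<Sum>j<N. if x j = x k \<and> y k then g (x k) / n (x k) else 0)
      = (if y k then g (x k) / n (x k) * n (x k) else 0)" for k
  proof -
    have "(\<Sum>j<N. if x j = x k then g (x k) / n (x k) else 0) = g (x k) / n (x k) * n (x k)"
      unfolding n_def real_card_filter_lessThan sum_distrib_left by (rule sum.cong) auto
    then show ?thesis by simp
  qed
  \<comment> \<open>Double counting: positive sample k is counted once for each of the n (x k) samples
    sharing its features.\<close>
  have "(\<Sum>j<N. g (x j) * positive_rate N x y (x j))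
      = (\<Sum>k<N. \<Sum>j<N. if x j = x k \<and> y k then g (x k) / n (x k) else 0)"
    unfolding rate by (subst sum.swap) (simp add: eq_commute)
  also have "\<dots> = (\<Sum>k<N. if y k then g (x k) else 0)"
    unfolding count by (intro sum.cong) (auto dest: n_pos)
  finally show ?thesis ..
qed

lemma TP_minus_FP_eq_sum_positive_rate:
  "real (TP p N x y c i) - real (FP p N x y c i) * a =
    (\<Sum>j<N. if p i \<le> c (x j) then (1 + a) * positive_rate N x y (x j) - a else 0)"
proof -
  let ?r = "positive_rate N x y"
  have TP: "real (TP p N x y c i) = (\<Sum>j<N. if p i \<le> c (x j) then ?r (x j) else 0)"
  proof -
    have "real (TP p N x y c i) = (\<Sum>j<N. if y j then (if p i \<le> c (x j) then 1 else 0) else 0)"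
      unfolding TP_def real_card_filter_lessThan by (intro sum.cong) auto
    also have "\<dots> = (\<Sum>j<N. (if p i \<le> c (x j) then 1 else 0) * ?r (x j))"
      by (rule sum_positive_eq_sum_positive_rate)
    also have "\<dots> = (\<Sum>j<N. if p i \<le> c (x j) then ?r (x j) else 0)"
      by (intro sum.cong) auto
    finally show ?thesis .
  qed
  have FP: "real (FP p N x y c i) = (\<Sum>j<N. if p i \<le> c (x j) then 1 else 0) - real (TP p N x y c i)"
    unfolding TP_def FP_def real_card_filter_lessThan sum_subtractf[symmetric]
    by (intro sum.cong) auto
  have "real (TP p N x y c i) - real (FP p N x y c i) * a =
      (\<Sum>j<N. (1 + a) * (if p i \<le> c (x j) then ?r (x j) else 0)
                 - a * (if p i \<le> c (x j) then 1 else 0))"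
    unfolding FP TP by (simp add: algebra_simps sum_distrib_left sum_subtractf sum.distrib)
  also have "\<dots> = (\<Sum>j<N. if p i \<le> c (x j) then (1 + a) * ?r (x j) - a else 0)"
    by (intro sum.cong) auto
  finally show ?thesis .
qed

text \<open>With a = t / (1 - t), a sample classified positive at threshold t contributes
  (1 + a) r - a = (r - t) / (1 - t), which is nonnegative exactly when r \<ge> t.\<close>

lemma net_benefit_le_net_benefit_positive_rate:
  assumes "p i < 1"
  shows "real (TP p N x y c i) - real (FP p N x y c i) * (p i / (1 - p i))
    \<le> real (TP p N x y (positive_rate N x y) i)
        - real (FP p N x y (positive_rate N x y) i) * (p i / (1 - p i))"
proof -
  have "(1 + p i / (1 - p i)) * r - p i / (1 - p i) = (r - p i) / (1 - p i)" for r
    using assms by (simp add: divide_simps)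
  then show ?thesis
    unfolding TP_minus_FP_eq_sum_positive_rate
    by (intro sum_mono) (use assms in \<open>auto simp: divide_nonneg_pos divide_nonpos_pos\<close>)
qed

lemma threshold_less_last:
  fixes p :: "nat \<Rightarrow> real"
  assumes "\<And>i. i \<le> M \<Longrightarrow> p i < p (i+1)" and "i \<le> M"
  shows "p i < p (M+1)"
proof -
  have "p i \<le> p M" using \<open>i \<le> M\<close>
  proof (induction rule: dec_induct)
    case (step n)
    then show ?case using assms(1)[of n] by simp
  qed simp
  then show ?thesis using assms(1)[of M] by simp
qed

lemma AUNBC_le_AUNBC_positive_rate:
  assumes "\<And>i. i \<le> M \<Longrightarrow> p i < p (i+1)" and "p (M+1) = 1"
  shows "AUNBC p M N x y c \<le> AUNBC p M N x y (positive_rate N x y)"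
  unfolding AUNBC_def
proof (rule mult_left_mono[OF sum_mono])
  fix i assume "i \<in> {..M}"
  then have "p i < p (i+1)" and "p i < 1"
    using assms threshold_less_last[of M p i] by auto
  then show "(p (i+1) - p i) * (real (TP p N x y c i) - real (FP p N x y c i) * (p i / (1 - p i)))
    \<le> (p (i+1) - p i) * (real (TP p N x y (positive_rate N x y) i)
        - real (FP p N x y (positive_rate N x y) i) * (p i / (1 - p i)))"
    by (intro mult_left_mono net_benefit_le_net_benefit_positive_rate) auto
qed simp

lemma convex_mean_mem:
  fixes f :: "'b \<Rightarrow> 'a::real_vector"
  assumes "convex C" "finite S" "S \<noteq> {}" "\<And>j. j \<in> S \<Longrightarrow> f j \<in> C"
  shows "(\<Sum>j\<in>S. f j) /\<^sub>R real (card S) \<in> C"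
proof -
  have "(\<Sum>j\<in>S. (1 / real (card S)) *\<^sub>R f j) \<in> C"
    using assms by (intro convex_sum) (auto simp: card_gt_0_iff)
  then show ?thesis by (simp add: scaleR_sum_right divide_inverse_commute)
qed

lemma positive_rate_calibrated:
  assumes "convex G" "G \<noteq> {}"
  shows "\<exists>q\<in>G. q * real (card {j. j < N \<and> positive_rate N x y (x j) \<in> G})
                = real (card {j. j < N \<and> positive_rate N x y (x j) \<in> G \<and> y j})"
proof -
  let ?r = "positive_rate N x y"
  define S where "S = {j. j < N \<and> ?r (x j) \<in> G}"
  have "finite S" by (simp add: S_def)
  have "real (card {j. j < N \<and> ?r (x j) \<in> G \<and> y j})
      = (\<Sum>j<N. if y j then (if ?r (x j) \<in> G then 1 else 0) else 0)"
    unfolding real_card_filter_lessThan by (intro sum.cong) auto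
  also have "\<dots> = (\<Sum>j<N. (if ?r (x j) \<in> G then 1 else 0) * ?r (x j))"
    by (rule sum_positive_eq_sum_positive_rate)
  also have "\<dots> = (\<Sum>j<N. if ?r (x j) \<in> G then ?r (x j) else 0)"
    by (intro sum.cong) auto
  also have "\<dots> = (\<Sum>j\<in>S. ?r (x j))"
  proof -
    have "S = {j \<in> {..<N}. ?r (x j) \<in> G}" by (auto simp: S_def)
    then show ?thesis
      using sum.inter_filter[of "{..<N}" "\<lambda>j. ?r (x j)" "\<lambda>j. ?r (x j) \<in> G"] by simp
  qed
  finally have positives: "real (card {j. j < N \<and> ?r (x j) \<in> G \<and> y j}) = (\<Sum>j\<in>S. ?r (x j))" .
  show ?thesis
  proof (cases "S = {}")
    case True
    obtain q where "q \<in> G" using \<open>G \<noteq> {}\<close> by blast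
    then show ?thesis using True positives unfolding S_def[symmetric] by auto
  next
    case False
    have "(\<Sum>j\<in>S. ?r (x j)) / real (card S) \<in> G"
      using convex_mean_mem[OF \<open>convex G\<close> \<open>finite S\<close> False, of "\<lambda>j. ?r (x j)"]
      by (simp add: S_def divide_inverse_commute)
    with False positives show ?thesis
      by (intro bexI[of _ "(\<Sum>j\<in>S. ?r (x j)) / real (card S)"]) (simp_all add: S_def)
  qed
qed

theorem corollary2:
  fixes p :: "nat \<Rightarrow> real" and M N :: nat
    and x :: "nat \<Rightarrow> 'a" and y :: "nat \<Rightarrow> bool" and cstar :: "'a \<Rightarrow> real"
  assumes p0: "p 0 = 0" and pM: "p (M+1) = 1"
    and pmono: "\<And>i. i \<le> M \<Longrightarrow> p i < p (i+1)"
    and cstar_rm: "risk_model cstar"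
    and cstar_max: "\<And>c. risk_model c \<Longrightarrow> AUNBC p M N x y c \<le> AUNBC p M N x y cstar"
  shows "\<exists>c'. risk_model c' \<and> AUNBC p M N x y c' = AUNBC p M N x y cstar \<and>
           (\<exists>q :: nat \<Rightarrow> real. \<forall>i\<le>M. q i \<in> risk_group p M i \<and>
               q i * real (Ngrp p M N x c' i) = real (Ogrp p M N x y c' i))"
proof -
  let ?r = "positive_rate N x y"
  have "AUNBC p M N x y cstar \<le> AUNBC p M N x y ?r"
    using pmono pM by (rule AUNBC_le_AUNBC_positive_rate)
  then have optimal: "AUNBC p M N x y ?r = AUNBC p M N x y cstar"
    using cstar_max[OF risk_model_positive_rate] by (rule antisym[rotated])
  have "\<exists>q\<in>risk_group p M i. q * real (Ngrp p M N x ?r i) = real (Ogrp p M N x y ?r i)"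
    if "i \<le> M" for i
  proof -
    have "p i \<in> risk_group p M i"
      using that pmono threshold_less_last[of M p i] pM unfolding risk_group_def by auto
    moreover have "convex (risk_group p M i)" by (simp add: risk_group_def)
    ultimately show ?thesis
      unfolding Ngrp_def Ogrp_def by (intro positive_rate_calibrated) auto
  qed
  then obtain q where "\<forall>i\<le>M. q i \<in> risk_group p M i \<and>
      q i * real (Ngrp p M N x ?r i) = real (Ogrp p M N x y ?r i)"
    by metis
  with optimal risk_model_positive_rate show ?thesis by blast
qed

end
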